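(* Let $P$ be a dcpo. The following are equivalent: (1) $\Sigma P$ is a $d^{\ast}$-space; (2) for every family $\{{\uparrow}F_d\mid d\in D\}\subseteq\mathbf{Fin}\,P$ that is filtered under inclusion, every ${\uparrow}F\in\mathbf{Fin}\,P$ and every nonempty Scott open set $U$, if $\bigcap_{d\in D}{\uparrow}F_d\cap{\uparrow}F\subseteq U$, then ${\uparrow}F_d\cap{\uparrow}F\subseteq U$ for some $d\in D$.
   Context: A dcpo is a poset in which every directed subset has a supremum. A subset $U$ of a poset $P$ is Scott open if $U={\uparrow}U$ and, for every directed $D$ whose supremum exists, $\bigvee D\in U$ implies $D\cap U\neq\emptyset$. The space $\Sigma P$ is $P$ with the Scott topology; its specialization order is the order of $P$. $\mathbf{Fin}\,P=\{{\uparrow}F\mid F\subseteq P$ nonempty finite$\}$. A family of sets is filtered if any two of its members contain a common member. All spaces are $T_0$. The specialization order of a space $X$ is given by $x\le y$ iff $x\in cl(\{y\})$. A $T_0$-space $X$ is a $d^{\ast}$-space if for every directed $D\subseteq X$ (in the specialization order), every $x\in X$ and every nonempty open $U\subseteq X$, $\bigcap_{d\in D}{\uparrow}d\cap{\uparrow}x\subseteq U$ implies ${\uparrow}d\cap{\uparrow}x\subseteq U$ for some $d\in D$. *)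

theory Defs
  imports "HOL-Analysis.Analysis"
begin

text \<open>Posets are modelled by the type class order; the poset P is the whole type.\<close>

definition up :: "'a::order set \<Rightarrow> 'a set" where
  "up A = {y. \<exists>x\<in>A. x \<le> y}"

definition directed :: "'a::order set \<Rightarrow> bool" where
  "directed D \<longleftrightarrow> D \<noteq> {} \<and> (\<forall>x\<in>D. \<forall>y\<in>D. \<exists>z\<in>D. x \<le> z \<and> y \<le> z)"

definition is_sup :: "'a::order set \<Rightarrow> 'a \<Rightarrow> bool" where
  "is_sup D s \<longleftrightarrow> (\<forall>x\<in>D. x \<le> s) \<and> (\<forall>u. (\<forall>x\<in>D. x \<le> u) \<longrightarrow> s \<le> u)"

definition dcpo :: "'a::order itself \<Rightarrow> bool" where
  "dcpo _ \<longleftrightarrow> (\<forall>D::'a set. directed D \<longrightarrow> (\<exists>s. is_sup D s))"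

definition scott_open :: "'a::order set \<Rightarrow> bool" where
  "scott_open U \<longleftrightarrow> U = up U \<and>
     (\<forall>D s. directed D \<longrightarrow> is_sup D s \<longrightarrow> s \<in> U \<longrightarrow> D \<inter> U \<noteq> {})"

lemma istopology_scott_open: "istopology scott_open"
  unfolding istopology_def
proof (intro conjI allI impI)
  fix S T :: "'a set" assume S: "scott_open S" and T: "scott_open T"
  show "scott_open (S \<inter> T)"
    unfolding scott_open_def
  proof (intro conjI allI impI)
    have "S = up S" "T = up T" using S T by (auto simp: scott_open_def)
    then show "S \<inter> T = up (S \<inter> T)" unfolding up_def by blast
  next
    fix D s assume D: "directed D" and s: "is_sup D s" and sin: "s \<in> S \<inter> T"
    have "D \<inter> S \<noteq> {}" using S D s sin by (auto simp: scott_open_def)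
    then obtain a where a: "a \<in> D" "a \<in> S" by blast
    have "D \<inter> T \<noteq> {}" using T D s sin by (auto simp: scott_open_def)
    then obtain b where b: "b \<in> D" "b \<in> T" by blast
    obtain c where c: "c \<in> D" "a \<le> c" "b \<le> c" using D a b unfolding directed_def by blast
    have "c \<in> S" using S a c unfolding scott_open_def up_def by blast
    moreover have "c \<in> T" using T b c unfolding scott_open_def up_def by blast
    ultimately show "D \<inter> (S \<inter> T) \<noteq> {}" using c by blast
  qed
next
  fix K :: "'a set set" assume K: "\<forall>S\<in>K. scott_open S"
  show "scott_open (\<Union>K)"
    unfolding scott_open_def
  proof (intro conjI allI impI)
    show "\<Union>K = up (\<Union>K)" using K unfolding scott_open_def up_def by blast
  next
    fix D s assume D: "directed D" and s: "is_sup D s" and sin: "s \<in> \<Union>K"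
    then obtain S where "S \<in> K" "s \<in> S" by blast
    then show "D \<inter> \<Union>K \<noteq> {}" using K D s unfolding scott_open_def by blast
  qed
qed

definition scott_topology :: "'a::order topology" where
  "scott_topology = topology scott_open"

lemma openin_scott_topology: "openin scott_topology U \<longleftrightarrow> scott_open U"
  unfolding scott_topology_def topology_inverse'[OF istopology_scott_open] ..

definition spec_le :: "'a topology \<Rightarrow> 'a \<Rightarrow> 'a \<Rightarrow> bool" where
  "spec_le X x y \<longleftrightarrow> x \<in> X closure_of {y}"

definition spec_up :: "'a topology \<Rightarrow> 'a \<Rightarrow> 'a set" where
  "spec_up X x = {y \<in> topspace X. spec_le X x y}"

definition spec_directed :: "'a topology \<Rightarrow> 'a set \<Rightarrow> bool" where
  "spec_directed X D \<longleftrightarrow> D \<noteq> {} \<and>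
     (\<forall>x\<in>D. \<forall>y\<in>D. \<exists>z\<in>D. spec_le X x z \<and> spec_le X y z)"

definition d_star_space :: "'a topology \<Rightarrow> bool" where
  "d_star_space X \<longleftrightarrow> t0_space X \<and>
     (\<forall>D x U. D \<subseteq> topspace X \<longrightarrow> spec_directed X D \<longrightarrow> x \<in> topspace X \<longrightarrow>
        openin X U \<longrightarrow> U \<noteq> {} \<longrightarrow>
        (\<Inter>d\<in>D. spec_up X d) \<inter> spec_up X x \<subseteq> U \<longrightarrow>
        (\<exists>d\<in>D. spec_up X d \<inter> spec_up X x \<subseteq> U))"

definition Fin :: "'a::order set set" where
  "Fin = {up F | F. finite F \<and> F \<noteq> {}}"

definition filtered :: "'b set set \<Rightarrow> bool" where
  "filtered \<F> \<longleftrightarrow> \<F> \<noteq> {} \<and> (\<forall>A\<in>\<F>. \<forall>B\<in>\<F>. \<exists>C\<in>\<F>. C \<subseteq> A \<and> C \<subseteq> B)"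

end

(* In \<Sigma>P the specialization order is the order of P, so \<Sigma>P is a d*-space iff for every
   directed D, point x and nonempty Scott open U, (\<Inter>d\<in>D. \<up>d) \<inter> \<up>x \<subseteq> U implies
   \<up>d \<inter> \<up>x \<subseteq> U for some d \<in> D.  Condition (2) contains this as the case F_d = {d},
   F = {x}.  Conversely, since F is finite and the family is filtered, it suffices to treat
   F = {x}.  If no \<up>F_d \<inter> \<up>x lies in U, the elements a \<in> F_d with \<up>a \<inter> \<up>x not
   contained in U form a family of nonempty finite sets that is filtered with respect to \<up>;
   Rudin's lemma yields a directed D meeting each of them, and the d*-property for D gives a
   point of (\<Inter>d. \<up>F_d) \<inter> \<up>x outside U.  Rudin's lemma follows from Zorn's lemma:
   a minimal "Rudin set" is directed. *)

theory Submission
  imports Defs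
begin

lemma mem_up_iff: "y \<in> up A \<longleftrightarrow> (\<exists>x\<in>A. x \<le> y)"
  by (simp add: up_def)

lemma up_singleton: "up {x} = {x..}"
  by (auto simp: up_def)

lemma up_eq_UN_singleton: "up A = (\<Union>x\<in>A. up {x})"
  by (auto simp: up_def)

lemma subset_up: "A \<subseteq> up A"
  by (auto simp: up_def)

lemma up_Int_downset_mono:
  assumes "up S \<subseteq> up T" and downset: "\<And>a b. a \<le> b \<Longrightarrow> b \<in> E \<Longrightarrow> a \<in> E"
  shows "up (S \<inter> E) \<subseteq> up (T \<inter> E)"
proof
  fix y assume "y \<in> up (S \<inter> E)"
  then obtain s where s: "s \<in> S" "s \<in> E" "s \<le> y" by (auto simp: mem_up_iff)
  then have "s \<in> up S" by (auto simp: mem_up_iff)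
  then have "s \<in> up T" using assms(1) by blast
  then obtain t where t: "t \<in> T" "t \<le> s" by (auto simp: mem_up_iff)
  then have "t \<in> E" using downset s(2) by blast
  moreover have "t \<le> y" using t(2) s(3) by (rule order.trans)
  ultimately show "y \<in> up (T \<inter> E)" using t(1) unfolding mem_up_iff by blast
qed

lemma subset_Zorn_minimal:
  assumes "\<A> \<noteq> {}" and ch: "\<And>\<C>. \<C> \<noteq> {} \<Longrightarrow> subset.chain \<A> \<C> \<Longrightarrow> \<Inter>\<C> \<in> \<A>"
  shows "\<exists>M\<in>\<A>. \<forall>X\<in>\<A>. X \<subseteq> M \<longrightarrow> X = M"
proof -
  have "\<exists>M\<in>uminus ` \<A>. \<forall>X\<in>uminus ` \<A>. M \<subseteq> X \<longrightarrow> X = M"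
  proof (rule subset_Zorn_nonempty)
    show "uminus ` \<A> \<noteq> {}" using assms(1) by blast
  next
    fix \<C> assume "\<C> \<noteq> {}" and "subset.chain (uminus ` \<A>) \<C>"
    then have "uminus ` \<C> \<noteq> {}" and "subset.chain \<A> (uminus ` \<C>)"
      by (auto simp: subset_chain_def)
    then have "\<Inter>(uminus ` \<C>) \<in> \<A>" by (rule ch)
    moreover have "\<Union>\<C> = - \<Inter>(uminus ` \<C>)" by auto
    ultimately show "\<Union>\<C> \<in> uminus ` \<A>" by (intro image_eqI)
  qed
  then obtain N where N: "N \<in> uminus ` \<A>" and max: "\<forall>X\<in>uminus ` \<A>. N \<subseteq> X \<longrightarrow> X = N"
    by (rule bexE)
  from N obtain M where M: "M \<in> \<A>" and "N = - M" by (rule imageE)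
  have "X = M" if "X \<in> \<A>" "X \<subseteq> M" for X
  proof -
    have "- X \<in> uminus ` \<A>" using that(1) by (rule imageI)
    moreover have "N \<subseteq> - X" using \<open>N = - M\<close> that(2) by blast
    ultimately have "- X = N" using max by blast
    then show ?thesis using \<open>N = - M\<close> by simp
  qed
  with M show ?thesis by blast
qed

lemma chain_Inter_Int_finite_nonempty:
  assumes "\<C> \<noteq> {}" "subset.chain \<A> \<C>" "finite S" "\<And>A. A \<in> \<C> \<Longrightarrow> A \<inter> S \<noteq> {}"
  shows "\<Inter>\<C> \<inter> S \<noteq> {}"
proof -
  have "(\<lambda>A. A \<inter> S) ` \<C> \<subseteq> Pow S" by blast
  then have "finite ((\<lambda>A. A \<inter> S) ` \<C>)" using \<open>finite S\<close> by (metis finite_Pow_iff finite_subset)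
  moreover have "subset.chain UNIV ((\<lambda>A. A \<inter> S) ` \<C>)"
    using assms(2) by (auto simp: subset_chain_def)
  ultimately have "\<Inter>((\<lambda>A. A \<inter> S) ` \<C>) \<in> (\<lambda>A. A \<inter> S) ` \<C>"
    using assms(1) by (intro Inter_in_chain) auto
  moreover have "\<Inter>((\<lambda>A. A \<inter> S) ` \<C>) = \<Inter>\<C> \<inter> S" using assms(1) by blast
  ultimately obtain A where "A \<in> \<C>" "\<Inter>\<C> \<inter> S = A \<inter> S" by auto
  then show ?thesis using assms(4) by simp
qed

definition rudin_set :: "'a::order set set \<Rightarrow> 'a set \<Rightarrow> bool" where
  "rudin_set G M \<longleftrightarrow> M \<subseteq> \<Union>G \<and> (\<forall>S\<in>G. M \<inter> S \<noteq> {}) \<and>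
     (\<forall>S\<in>G. \<forall>T\<in>G. up T \<subseteq> up S \<longrightarrow> M \<inter> T \<subseteq> up (M \<inter> S))"

lemma rudin_setD:
  assumes "rudin_set G M"
  shows rudin_set_subset_Union: "M \<subseteq> \<Union>G"
    and rudin_set_Int_nonempty: "S \<in> G \<Longrightarrow> M \<inter> S \<noteq> {}"
    and rudin_set_Int_subset_up: "S \<in> G \<Longrightarrow> T \<in> G \<Longrightarrow> up T \<subseteq> up S \<Longrightarrow> M \<inter> T \<subseteq> up (M \<inter> S)"
  using assms by (auto simp: rudin_set_def)

lemma rudin_setI:
  assumes "M \<subseteq> \<Union>G" "\<And>S. S \<in> G \<Longrightarrow> M \<inter> S \<noteq> {}"
    and "\<And>S T. S \<in> G \<Longrightarrow> T \<in> G \<Longrightarrow> up T \<subseteq> up S \<Longrightarrow> M \<inter> T \<subseteq> up (M \<inter> S)"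
  shows "rudin_set G M"
  using assms by (auto simp: rudin_set_def)

lemma rudin_set_Union:
  assumes "\<And>S. S \<in> G \<Longrightarrow> S \<noteq> {}"
  shows "rudin_set G (\<Union>G)"
proof (rule rudin_setI)
  fix S assume "S \<in> G" then show "\<Union>G \<inter> S \<noteq> {}" using assms by blast
next
  fix S T assume "S \<in> G" "T \<in> G" "up T \<subseteq> up S"
  show "\<Union>G \<inter> T \<subseteq> up (\<Union>G \<inter> S)"
  proof
    fix x assume "x \<in> \<Union>G \<inter> T"
    then have "x \<in> up S" using subset_up[of T] \<open>up T \<subseteq> up S\<close> by blast
    then show "x \<in> up (\<Union>G \<inter> S)" using \<open>S \<in> G\<close> unfolding mem_up_iff by blast
  qed
qed simp

lemma rudin_set_chain_Inter:
  assumes fin: "\<And>S. S \<in> G \<Longrightarrow> finite S" and "\<C> \<noteq> {}"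
    and rudin: "\<And>M. M \<in> \<C> \<Longrightarrow> rudin_set G M" and chain: "subset.chain \<A> \<C>"
  shows "rudin_set G (\<Inter>\<C>)"
proof (rule rudin_setI)
  obtain M where "M \<in> \<C>" using \<open>\<C> \<noteq> {}\<close> by blast
  then have "\<Inter>\<C> \<subseteq> M" by blast
  also have "M \<subseteq> \<Union>G" using rudin[OF \<open>M \<in> \<C>\<close>] by (rule rudin_set_subset_Union)
  finally show "\<Inter>\<C> \<subseteq> \<Union>G" .
next
  fix S assume "S \<in> G"
  show "\<Inter>\<C> \<inter> S \<noteq> {}"
  proof (rule chain_Inter_Int_finite_nonempty[OF \<open>\<C> \<noteq> {}\<close> chain fin[OF \<open>S \<in> G\<close>]])
    fix M assume "M \<in> \<C>"
    then show "M \<inter> S \<noteq> {}" using rudin_set_Int_nonempty[OF rudin \<open>S \<in> G\<close>] by blast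
  qed
next
  fix S T assume ST: "S \<in> G" "T \<in> G" "up T \<subseteq> up S"
  show "\<Inter>\<C> \<inter> T \<subseteq> up (\<Inter>\<C> \<inter> S)"
  proof
    fix x assume x: "x \<in> \<Inter>\<C> \<inter> T"
    have "finite (S \<inter> {..x})" using fin[OF \<open>S \<in> G\<close>] by simp
    then have "\<Inter>\<C> \<inter> (S \<inter> {..x}) \<noteq> {}"
    proof (rule chain_Inter_Int_finite_nonempty[OF \<open>\<C> \<noteq> {}\<close> chain])
      fix M assume "M \<in> \<C>"
      then have "x \<in> M \<inter> T" using x by blast
      then have "x \<in> up (M \<inter> S)" using rudin_set_Int_subset_up[OF rudin[OF \<open>M \<in> \<C>\<close>] ST] by blast
      then show "M \<inter> (S \<inter> {..x}) \<noteq> {}" by (auto simp: mem_up_iff)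
    qed
    then show "x \<in> up (\<Inter>\<C> \<inter> S)" by (auto simp: mem_up_iff)
  qed
qed

lemma ex_minimal_rudin_set:
  assumes "\<And>S. S \<in> G \<Longrightarrow> finite S \<and> S \<noteq> {}"
  obtains M where "rudin_set G M" "\<And>X. rudin_set G X \<Longrightarrow> X \<subseteq> M \<Longrightarrow> X = M"
proof -
  have "\<exists>M\<in>{M. rudin_set G M}. \<forall>X\<in>{M. rudin_set G M}. X \<subseteq> M \<longrightarrow> X = M"
  proof (rule subset_Zorn_minimal)
    show "{M. rudin_set G M} \<noteq> {}" using rudin_set_Union assms by blast
    fix \<C> assume "\<C> \<noteq> {}" and chain: "subset.chain {M. rudin_set G M} \<C>"
    moreover have "rudin_set G M" if "M \<in> \<C>" for M
      using chain that by (auto simp: subset_chain_def)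
    ultimately show "\<Inter>\<C> \<in> {M. rudin_set G M}"
      using rudin_set_chain_Inter[of G \<C>] assms by blast
  qed
  then show ?thesis using that by blast
qed

text \<open>Otherwise removing the points above \<open>x\<close> from \<open>M\<close> would give a smaller Rudin set.\<close>
lemma minimal_rudin_set_Int_subset_up:
  assumes M: "rudin_set G M" and min: "\<And>X. rudin_set G X \<Longrightarrow> X \<subseteq> M \<Longrightarrow> X = M"
    and "x \<in> M"
  shows "\<exists>S\<in>G. M \<inter> S \<subseteq> up {x}"
proof (rule ccontr)
  assume "\<not> ?thesis"
  then have escape: "\<forall>S\<in>G. \<exists>m\<in>M \<inter> S. \<not> x \<le> m" by (auto simp: up_singleton)
  define M' where "M' = M - {x..}"
  have "rudin_set G M'"
  proof (rule rudin_setI)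
    show "M' \<subseteq> \<Union>G" using rudin_set_subset_Union[OF M] by (auto simp: M'_def)
    show "M' \<inter> S \<noteq> {}" if "S \<in> G" for S using escape that by (auto simp: M'_def)
    fix S T assume ST: "S \<in> G" "T \<in> G" "up T \<subseteq> up S"
    show "M' \<inter> T \<subseteq> up (M' \<inter> S)"
    proof
      fix y assume y: "y \<in> M' \<inter> T"
      then have "y \<in> up (M \<inter> S)" using rudin_set_Int_subset_up[OF M ST] unfolding M'_def by blast
      then obtain m where m: "m \<in> M" "m \<in> S" "m \<le> y" by (auto simp: mem_up_iff)
      have "\<not> x \<le> y" using y by (simp add: M'_def)
      then have "\<not> x \<le> m" using m(3) order.trans by blast
      then show "y \<in> up (M' \<inter> S)" using m by (auto simp: M'_def mem_up_iff)
    qed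
  qed
  then have "M' = M" by (rule min) (auto simp: M'_def)
  then show False using \<open>x \<in> M\<close> by (auto simp: M'_def)
qed

lemma minimal_rudin_set_directed:
  assumes "G \<noteq> {}" and filt: "\<And>S1 S2. S1 \<in> G \<Longrightarrow> S2 \<in> G \<Longrightarrow> \<exists>S3\<in>G. up S3 \<subseteq> up S1 \<and> up S3 \<subseteq> up S2"
    and M: "rudin_set G M" and min: "\<And>X. rudin_set G X \<Longrightarrow> X \<subseteq> M \<Longrightarrow> X = M"
  shows "directed M"
  unfolding directed_def
proof (intro conjI ballI)
  obtain S where "S \<in> G" using \<open>G \<noteq> {}\<close> by blast
  then show "M \<noteq> {}" using rudin_set_Int_nonempty[OF M] by blast
next
  fix x y assume "x \<in> M" "y \<in> M"
  obtain S1 where S1: "S1 \<in> G" "M \<inter> S1 \<subseteq> up {x}"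
    using minimal_rudin_set_Int_subset_up[OF M min \<open>x \<in> M\<close>] by blast
  obtain S2 where S2: "S2 \<in> G" "M \<inter> S2 \<subseteq> up {y}"
    using minimal_rudin_set_Int_subset_up[OF M min \<open>y \<in> M\<close>] by blast
  obtain S3 where S3: "S3 \<in> G" "up S3 \<subseteq> up S1" "up S3 \<subseteq> up S2" using filt[OF S1(1) S2(1)] by blast
  obtain z where z: "z \<in> M \<inter> S3" using rudin_set_Int_nonempty[OF M S3(1)] by blast
  have "z \<in> up (M \<inter> S1)" using rudin_set_Int_subset_up[OF M S1(1) S3(1,2)] z by blast
  then obtain a where "a \<in> M \<inter> S1" "a \<le> z" unfolding mem_up_iff by blast
  then have "x \<le> z" using S1(2) order.trans by (auto simp: up_singleton)
  have "z \<in> up (M \<inter> S2)" using rudin_set_Int_subset_up[OF M S2(1) S3(1,3)] z by blast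
  then obtain b where "b \<in> M \<inter> S2" "b \<le> z" unfolding mem_up_iff by blast
  then have "y \<le> z" using S2(2) order.trans by (auto simp: up_singleton)
  show "\<exists>z\<in>M. x \<le> z \<and> y \<le> z" using z \<open>x \<le> z\<close> \<open>y \<le> z\<close> by blast
qed

lemma rudin_lemma:
  assumes "\<And>S. S \<in> G \<Longrightarrow> finite S \<and> S \<noteq> {}" and "G \<noteq> {}"
    and "\<And>S1 S2. S1 \<in> G \<Longrightarrow> S2 \<in> G \<Longrightarrow> \<exists>S3\<in>G. up S3 \<subseteq> up S1 \<and> up S3 \<subseteq> up S2"
  obtains D where "directed D" "D \<subseteq> \<Union>G" "\<forall>S\<in>G. D \<inter> S \<noteq> {}"
proof -
  obtain M where M: "rudin_set G M" and min: "\<And>X. rudin_set G X \<Longrightarrow> X \<subseteq> M \<Longrightarrow> X = M"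
    using ex_minimal_rudin_set assms(1) by blast
  have "directed M" using minimal_rudin_set_directed[OF assms(2,3) M min] .
  with M show ?thesis using that by (auto simp: rudin_set_def)
qed

lemma scott_open_UNIV: "scott_open (UNIV :: 'a::order set)"
  by (auto simp: scott_open_def up_def directed_def)

lemma scott_open_Compl_atMost: "scott_open (- {..y})"
  unfolding scott_open_def
proof (intro conjI allI impI)
  show "- {..y} = up (- {..y})" using order.trans by (auto simp: up_def)
  fix D s assume "directed D" "is_sup D s" "s \<in> - {..y}"
  then show "D \<inter> - {..y} \<noteq> {}" by (auto simp: is_sup_def)
qed

lemma topspace_scott_topology: "topspace (scott_topology :: 'a::order topology) = UNIV"
  using openin_subset[of scott_topology UNIV]
  by (auto simp: openin_scott_topology scott_open_UNIV)

lemma spec_le_scott_topology: "spec_le scott_topology x y \<longleftrightarrow> x \<le> y"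
proof
  assume "spec_le scott_topology x y"
  then have closure: "y \<in> T" if "x \<in> T" "scott_open T" for T
    using that by (auto simp: spec_le_def in_closure_of openin_scott_topology)
  show "x \<le> y"
  proof (rule ccontr)
    assume "\<not> x \<le> y"
    then have "x \<in> - {..y}" by simp
    then have "y \<in> - {..y}" using scott_open_Compl_atMost by (rule closure)
    then show False by simp
  qed
next
  assume "x \<le> y"
  have "y \<in> T" if "x \<in> T" "scott_open T" for T
    using that \<open>x \<le> y\<close> by (auto simp: scott_open_def up_def)
  then show "spec_le scott_topology x y"
    by (auto simp: spec_le_def in_closure_of topspace_scott_topology openin_scott_topology)
qed

lemma spec_up_scott_topology: "spec_up scott_topology x = up {x}"
  by (auto simp: spec_up_def spec_le_scott_topology topspace_scott_topology up_def)

lemma spec_directed_scott_topology: "spec_directed scott_topology D \<longleftrightarrow> directed D"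
  by (simp add: spec_directed_def directed_def spec_le_scott_topology)

lemma t0_space_scott_topology: "t0_space (scott_topology :: 'a::order topology)"
  unfolding t0_space_def openin_scott_topology
proof (intro ballI impI)
  fix x y :: 'a assume "x \<noteq> y"
  show "\<exists>U. scott_open U \<and> (x \<notin> U \<longleftrightarrow> y \<in> U)"
  proof (cases "y \<le> x")
    case True
    then have "\<not> x \<le> y" using \<open>x \<noteq> y\<close> by auto
    then show ?thesis using True scott_open_Compl_atMost[of y] by blast
  next
    case False
    then show ?thesis using scott_open_Compl_atMost[of x] by blast
  qed
qed

lemma d_star_space_scott_topology_iff:
  "d_star_space (scott_topology :: 'a::order topology) \<longleftrightarrow>
    (\<forall>D (x::'a) U. directed D \<longrightarrow> scott_open U \<longrightarrow> U \<noteq> {} \<longrightarrow>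
       (\<Inter>d\<in>D. up {d}) \<inter> up {x} \<subseteq> U \<longrightarrow> (\<exists>d\<in>D. up {d} \<inter> up {x} \<subseteq> U))"
  by (simp add: d_star_space_def t0_space_scott_topology topspace_scott_topology
      spec_directed_scott_topology openin_scott_topology spec_up_scott_topology)

lemma up_singleton_in_Fin: "up {x} \<in> Fin"
  unfolding Fin_def by blast

lemma filtered_up_image_directed:
  assumes "directed D"
  shows "filtered ((\<lambda>d. up {d}) ` D)"
  unfolding filtered_def
proof (intro conjI ballI)
  show "(\<lambda>d. up {d}) ` D \<noteq> {}" using assms by (auto simp: directed_def)
  fix A B assume "A \<in> (\<lambda>d. up {d}) ` D" "B \<in> (\<lambda>d. up {d}) ` D"
  then obtain a b where "a \<in> D" "b \<in> D" "A = {a..}" "B = {b..}" by (auto simp: up_singleton)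
  then obtain c where "c \<in> D" "a \<le> c" "b \<le> c" using assms by (auto simp: directed_def)
  then show "\<exists>C\<in>(\<lambda>d. up {d}) ` D. C \<subseteq> A \<and> C \<subseteq> B"
    using \<open>A = {a..}\<close> \<open>B = {b..}\<close> by (auto simp: up_singleton)
qed

lemma filtered_ex_Ball_finite:
  assumes "filtered \<F>" "finite S"
    and mono: "\<And>x A B. A \<in> \<F> \<Longrightarrow> B \<in> \<F> \<Longrightarrow> B \<subseteq> A \<Longrightarrow> P x A \<Longrightarrow> P x B"
    and "\<And>x. x \<in> S \<Longrightarrow> \<exists>A\<in>\<F>. P x A"
  shows "\<exists>A\<in>\<F>. \<forall>x\<in>S. P x A"
  using assms(2,4)
proof (induction S rule: finite_induct)
  case empty
  then show ?case using assms(1) by (auto simp: filtered_def)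
next
  case (insert a S)
  then obtain A where A: "A \<in> \<F>" "\<forall>x\<in>S. P x A" by blast
  obtain B where B: "B \<in> \<F>" "P a B" using insert.prems by blast
  obtain C where C: "C \<in> \<F>" "C \<subseteq> A" "C \<subseteq> B" using assms(1) A(1) B(1) unfolding filtered_def by blast
  have "\<forall>x\<in>insert a S. P x C" using mono[OF B(1) C(1,3) B(2)] mono[OF A(1) C(1,2)] A(2) by blast
  then show ?case using C(1) by blast
qed

lemma directed_d_star_if_Fin_d_star:
  fixes D :: "'a::order set"
  assumes Fin_d_star: "\<And>(\<F>::'a set set) F U. \<F> \<subseteq> Fin \<Longrightarrow> filtered \<F> \<Longrightarrow> F \<in> Fin \<Longrightarrow>
      scott_open U \<Longrightarrow> U \<noteq> {} \<Longrightarrow> \<Inter>\<F> \<inter> F \<subseteq> U \<Longrightarrow> \<exists>A\<in>\<F>. A \<inter> F \<subseteq> U"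
    and "directed D" "scott_open U" "U \<noteq> {}" "(\<Inter>d\<in>D. up {d}) \<inter> up {x} \<subseteq> U"
  shows "\<exists>d\<in>D. up {d} \<inter> up {x} \<subseteq> U"
proof -
  have Fin: "(\<lambda>d. up {d}) ` D \<subseteq> Fin" using up_singleton_in_Fin by blast
  have filtered: "filtered ((\<lambda>d. up {d}) ` D)" using \<open>directed D\<close> by (rule filtered_up_image_directed)
  have sub: "\<Inter>((\<lambda>d. up {d}) ` D) \<inter> up {x} \<subseteq> U" using assms(5) by simp
  show ?thesis
    using Fin_d_star[OF Fin filtered up_singleton_in_Fin \<open>scott_open U\<close> \<open>U \<noteq> {}\<close> sub] by simp
qed

lemma principal_Fin_d_star_if_directed_d_star:
  assumes d_star: "\<And>D U. directed D \<Longrightarrow> scott_open U \<Longrightarrow> U \<noteq> {} \<Longrightarrow>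
      (\<Inter>d\<in>D. up {d}) \<inter> up {x} \<subseteq> U \<Longrightarrow> \<exists>d\<in>D. up {d} \<inter> up {x} \<subseteq> U"
    and \<F>: "\<F> \<subseteq> Fin" "filtered \<F>" and U: "scott_open U" "U \<noteq> {}"
    and sub: "\<Inter>\<F> \<inter> up {x} \<subseteq> U"
  shows "\<exists>A\<in>\<F>. A \<inter> up {x} \<subseteq> U"
proof (rule ccontr)
  assume none: "\<not> ?thesis"
  have "\<forall>A\<in>\<F>. \<exists>F0. finite F0 \<and> F0 \<noteq> {} \<and> A = up F0" using \<F>(1) by (auto simp: Fin_def)
  then obtain g where g: "\<forall>A\<in>\<F>. finite (g A) \<and> g A \<noteq> {} \<and> A = up (g A)"
    by (rule bchoice[THEN exE]) blast
  then have g_finite: "finite (g A)" and up_g: "up (g A) = A"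
    if "A \<in> \<F>" for A
    using that by auto
  define E where "E = {a. \<not> up {a} \<inter> up {x} \<subseteq> U}"
  have E_downset: "a \<in> E" if "a \<le> b" "b \<in> E" for a b
    using that order.trans by (auto simp: E_def up_singleton)
  have mono: "up (g C \<inter> E) \<subseteq> up (g A \<inter> E)" if "A \<in> \<F>" "C \<in> \<F>" "C \<subseteq> A" for A C
  proof (rule up_Int_downset_mono)
    show "up (g C) \<subseteq> up (g A)" using that by (simp add: up_g)
  qed (rule E_downset)
  define G where "G = (\<lambda>A. g A \<inter> E) ` \<F>"
  have "finite S \<and> S \<noteq> {}" if "S \<in> G" for S
  proof -
    obtain A where A: "A \<in> \<F>" "S = g A \<inter> E" using \<open>S \<in> G\<close> by (auto simp: G_def)
    then obtain y where y: "y \<in> A" "x \<le> y" "y \<notin> U" using none by (auto simp: up_singleton)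
    then have "y \<in> up (g A)" using A(1) by (simp add: up_g)
    then obtain a where a: "a \<in> g A" "a \<le> y" by (auto simp: mem_up_iff)
    then have "a \<in> E" using y(2,3) by (auto simp: E_def up_singleton)
    then show ?thesis using a(1) g_finite[OF A(1)] A(2) by auto
  qed
  moreover have "G \<noteq> {}" using \<F>(2) by (auto simp: G_def filtered_def)
  moreover have "\<exists>S3\<in>G. up S3 \<subseteq> up S1 \<and> up S3 \<subseteq> up S2" if S: "S1 \<in> G" "S2 \<in> G" for S1 S2
  proof -
    obtain A B where AB: "A \<in> \<F>" "B \<in> \<F>" "S1 = g A \<inter> E" "S2 = g B \<inter> E"
      using S unfolding G_def by blast
    then obtain C where "C \<in> \<F>" "C \<subseteq> A" "C \<subseteq> B" using \<F>(2) unfolding filtered_def by blast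
    then show ?thesis using mono AB unfolding G_def by blast
  qed
  ultimately obtain D where D: "directed D" "D \<subseteq> \<Union>G" "\<forall>S\<in>G. D \<inter> S \<noteq> {}"
    by (rule rudin_lemma)
  have "\<not> up {d} \<inter> up {x} \<subseteq> U" if "d \<in> D" for d
    using that D(2) by (auto simp: G_def E_def)
  then have "\<not> (\<Inter>d\<in>D. up {d}) \<inter> up {x} \<subseteq> U" using d_star D(1) U by blast
  then obtain y where y: "y \<in> (\<Inter>d\<in>D. up {d})" "x \<le> y" "y \<notin> U" by (auto simp: up_singleton)
  have "y \<in> A" if "A \<in> \<F>" for A
  proof -
    have "D \<inter> (g A \<inter> E) \<noteq> {}" using D(3) that unfolding G_def by blast
    then obtain d where "d \<in> D" "d \<in> g A" by blast
    then have "y \<in> up (g A)" using y(1) by (auto simp: mem_up_iff)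
    then show ?thesis using that by (simp add: up_g)
  qed
  then show False using sub y(2,3) by (auto simp: up_singleton)
qed

lemma Fin_d_star_if_directed_d_star:
  fixes \<F> :: "'a::order set set"
  assumes d_star: "\<And>D (x::'a) U. directed D \<Longrightarrow> scott_open U \<Longrightarrow> U \<noteq> {} \<Longrightarrow>
      (\<Inter>d\<in>D. up {d}) \<inter> up {x} \<subseteq> U \<Longrightarrow> \<exists>d\<in>D. up {d} \<inter> up {x} \<subseteq> U"
    and \<F>: "\<F> \<subseteq> Fin" "filtered \<F>" and "F \<in> Fin" and U: "scott_open U" "U \<noteq> {}"
    and sub: "\<Inter>\<F> \<inter> F \<subseteq> U"
  shows "\<exists>A\<in>\<F>. A \<inter> F \<subseteq> U"
proof -
  obtain F0 where F0: "finite F0" "F = up F0" using \<open>F \<in> Fin\<close> by (auto simp: Fin_def)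
  have "\<exists>A\<in>\<F>. A \<inter> up {x} \<subseteq> U" if "x \<in> F0" for x
  proof (rule principal_Fin_d_star_if_directed_d_star[OF _ \<F> U])
    show "\<Inter>\<F> \<inter> up {x} \<subseteq> U" using sub that unfolding F0(2) up_eq_UN_singleton[of F0] by blast
  qed (rule d_star)
  then obtain A where "A \<in> \<F>" "\<forall>x\<in>F0. A \<inter> up {x} \<subseteq> U"
    using filtered_ex_Ball_finite[OF \<F>(2) F0(1), of "\<lambda>x A. A \<inter> up {x} \<subseteq> U"] by blast
  then have "A \<inter> F \<subseteq> U" unfolding F0(2) up_eq_UN_singleton[of F0] by blast
  with \<open>A \<in> \<F>\<close> show ?thesis by blast
qed

theorem mainTheorem2:
  assumes "dcpo TYPE('a::order)"
  shows "d_star_space (scott_topology :: 'a topology) \<longleftrightarrow>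
    (\<forall>(\<F>::'a set set) (F::'a set) (U::'a set). \<F> \<subseteq> Fin \<longrightarrow> filtered \<F> \<longrightarrow> F \<in> Fin \<longrightarrow>
       scott_open U \<longrightarrow> U \<noteq> {} \<longrightarrow>
       \<Inter>\<F> \<inter> F \<subseteq> U \<longrightarrow> (\<exists>A\<in>\<F>. A \<inter> F \<subseteq> U))"
  unfolding d_star_space_scott_topology_iff
  apply (intro iffI allI impI)
  subgoal premises prems for \<F> F U
    using Fin_d_star_if_directed_d_star[OF prems(1)[rule_format] prems(2-)] .
  subgoal premises prems for D x U
    using directed_d_star_if_Fin_d_star[OF prems(1)[rule_format] prems(2-)] .
  done

end
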